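(* Let $\partial:L_1\to L_0$ be a crossed module of Lie algebras. (i) For each $c\in L_1$, $(\partial(c),\xi_c)\in\mathbf Z_0(L_* )$, where $\xi_c(t)=-t\cdot c$. (ii) The linear map $\delta:L_1\to\mathbf Z_0(L_* )$, $\delta(c)=(\partial(c),\xi_c)$, together with the bilinear map $\mathbf Z_0(L_* )\times\mathbf Z_0(L_* )\to L_1$, $\{(x,\xi),(y,\eta)\}:=\xi(y)$, satisfies, for all $a\in L_1$, $u,v,w\in\mathbf Z_0(L_* )$: $\{\delta a,u\}+\{u,\delta a\}=0$, $\delta\{u,u\}=0$ and $\{u,\delta\{v,w\}\}+\{w,\delta\{u,v\}\}+\{v,\delta\{w,u\}\}=0$; hence (with $[u,v]:=\delta\{u,v\}$ on $\mathbf Z_0(L_* )$ and $[a,b]:=\{\delta a,\delta b\}$ on $L_1$) it is a braided crossed module of Lie algebras, called the centre $\mathbf Z_*(L_* )$ of $L_*$.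
   Context: All vector spaces over a field $k$ of characteristic $\neq2$. A crossed module of Lie algebras is a Lie algebra homomorphism $\partial:L_1\to L_0$ with an action $(x,a)\mapsto x\cdot a$ of $L_0$ on the Lie algebra $L_1$ (i.e. $[x,y]\cdot a=x\cdot(y\cdot a)-y\cdot(x\cdot a)$, $x\cdot[a,b]=[x\cdot a,b]+[a,x\cdot b]$) such that $\partial(x\cdot a)=[x,\partial a]$ and $\partial(a)\cdot b=[a,b]$. $\mathbf Z_0(L_* )$ is the vector space (under componentwise operations) of pairs $(x,\xi)$ with $x\in L_0$ and $\xi:L_0\to L_1$ a linear map such that for all $s,t\in L_0$, $a\in L_1$: $\partial\xi(t)=[x,t]$; $\xi(\partial a)=x\cdot a$; $\xi([s,t])=s\cdot\xi(t)-t\cdot\xi(s)$. A braided crossed module of Lie algebras is a Lie algebra homomorphism $\partial:M_1\to M_0$ with a bilinear map $\{-,-\}:M_0\times M_0\to M_1$ such that $\partial\{x,y\}=[x,y]$, $\{\partial a,\partial b\}=[a,b]$, $\{\partial a,x\}+\{x,\partial a\}=0$, $\{x,[y,z]\}+\{z,[x,y]\}+\{y,[z,x]\}=0$. *)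

theory Defs
  imports Complex_Main "HOL-Library.Function_Algebras" "HOL-Library.Product_Plus"
begin

text \<open>Vector spaces over a field 'k are ambient types of class ab_group_add with a
scalar multiplication satisfying the vector_space locale of HOL.  Subspaces are
carrier sets.\<close>

definition lin_on ::
  "('k::field \<Rightarrow> 'a::ab_group_add \<Rightarrow> 'a) \<Rightarrow> ('k \<Rightarrow> 'b::ab_group_add \<Rightarrow> 'b) \<Rightarrow> 'a set \<Rightarrow> ('a \<Rightarrow> 'b) \<Rightarrow> bool" where
  "lin_on sa sb S f \<longleftrightarrow>
     (\<forall>x\<in>S. \<forall>y\<in>S. f (x + y) = f x + f y) \<and> (\<forall>c. \<forall>x\<in>S. f (sa c x) = sb c (f x))"

definition subspace_on :: "('k::field \<Rightarrow> 'a::ab_group_add \<Rightarrow> 'a) \<Rightarrow> 'a set \<Rightarrow> bool" where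
  "subspace_on sa S \<longleftrightarrow> 0 \<in> S \<and> (\<forall>x\<in>S. \<forall>y\<in>S. x + y \<in> S) \<and> (\<forall>c. \<forall>x\<in>S. sa c x \<in> S)"

definition lie_algebra_on ::
  "('k::field \<Rightarrow> 'a::ab_group_add \<Rightarrow> 'a) \<Rightarrow> 'a set \<Rightarrow> ('a \<Rightarrow> 'a \<Rightarrow> 'a) \<Rightarrow> bool" where
  "lie_algebra_on sa S br \<longleftrightarrow>
     vector_space sa \<and> subspace_on sa S \<and>
     (\<forall>x\<in>S. \<forall>y\<in>S. br x y \<in> S) \<and>
     (\<forall>x\<in>S. lin_on sa sa S (br x)) \<and> (\<forall>y\<in>S. lin_on sa sa S (\<lambda>x. br x y)) \<and>
     (\<forall>x\<in>S. br x x = 0) \<and>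
     (\<forall>x\<in>S. \<forall>y\<in>S. \<forall>z\<in>S. br x (br y z) + br y (br z x) + br z (br x y) = 0)"

definition lie_hom_on ::
  "('k::field \<Rightarrow> 'a::ab_group_add \<Rightarrow> 'a) \<Rightarrow> 'a set \<Rightarrow> ('a \<Rightarrow> 'a \<Rightarrow> 'a) \<Rightarrow>
   ('k \<Rightarrow> 'b::ab_group_add \<Rightarrow> 'b) \<Rightarrow> 'b set \<Rightarrow> ('b \<Rightarrow> 'b \<Rightarrow> 'b) \<Rightarrow> ('a \<Rightarrow> 'b) \<Rightarrow> bool" where
  "lie_hom_on sa A bra sb B brb f \<longleftrightarrow>
     (\<forall>x\<in>A. f x \<in> B) \<and> lin_on sa sb A f \<and> (\<forall>x\<in>A. \<forall>y\<in>A. f (bra x y) = brb (f x) (f y))"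

definition crossed_module ::
  "('k::field \<Rightarrow> 'a::ab_group_add \<Rightarrow> 'a) \<Rightarrow> ('a \<Rightarrow> 'a \<Rightarrow> 'a) \<Rightarrow>
   ('k \<Rightarrow> 'b::ab_group_add \<Rightarrow> 'b) \<Rightarrow> ('b \<Rightarrow> 'b \<Rightarrow> 'b) \<Rightarrow>
   ('b \<Rightarrow> 'a) \<Rightarrow> ('a \<Rightarrow> 'b \<Rightarrow> 'b) \<Rightarrow> bool" where
  "crossed_module s0 br0 s1 br1 d act \<longleftrightarrow>
     lie_algebra_on s0 UNIV br0 \<and> lie_algebra_on s1 UNIV br1 \<and>
     lie_hom_on s1 UNIV br1 s0 UNIV br0 d \<and>
     (\<forall>x. lin_on s1 s1 UNIV (act x)) \<and> (\<forall>a. lin_on s0 s1 UNIV (\<lambda>x. act x a)) \<and>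
     (\<forall>x y a. act (br0 x y) a = act x (act y a) - act y (act x a)) \<and>
     (\<forall>x a b. act x (br1 a b) = br1 (act x a) b + br1 a (act x b)) \<and>
     (\<forall>x a. d (act x a) = br0 x (d a)) \<and>
     (\<forall>a b. act (d a) b = br1 a b)"

definition Z0 ::
  "('k::field \<Rightarrow> 'a::ab_group_add \<Rightarrow> 'a) \<Rightarrow> ('a \<Rightarrow> 'a \<Rightarrow> 'a) \<Rightarrow>
   ('k \<Rightarrow> 'b::ab_group_add \<Rightarrow> 'b) \<Rightarrow> ('b \<Rightarrow> 'a) \<Rightarrow> ('a \<Rightarrow> 'b \<Rightarrow> 'b) \<Rightarrow> ('a \<times> ('a \<Rightarrow> 'b)) set" where
  "Z0 s0 br0 s1 d act = {(x, \<xi>). lin_on s0 s1 UNIV \<xi> \<and>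
      (\<forall>t. d (\<xi> t) = br0 x t) \<and> (\<forall>a. \<xi> (d a) = act x a) \<and>
      (\<forall>s t. \<xi> (br0 s t) = act s (\<xi> t) - act t (\<xi> s))}"

text \<open>Componentwise scalar multiplication on L0 \<times> (L0 \<Rightarrow> L1); addition is the
componentwise one from Product_Plus / Function_Algebras.\<close>
definition zscale :: "('k \<Rightarrow> 'a \<Rightarrow> 'a) \<Rightarrow> ('k \<Rightarrow> 'b \<Rightarrow> 'b) \<Rightarrow> 'k \<Rightarrow> 'a \<times> ('a \<Rightarrow> 'b) \<Rightarrow> 'a \<times> ('a \<Rightarrow> 'b)" where
  "zscale s0 s1 c u = (s0 c (fst u), \<lambda>t. s1 c (snd u t))"

definition zdelta :: "('b \<Rightarrow> 'a) \<Rightarrow> ('a \<Rightarrow> 'b \<Rightarrow> 'b::uminus) \<Rightarrow> 'b \<Rightarrow> 'a \<times> ('a \<Rightarrow> 'b)" where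
  "zdelta d act c = (d c, \<lambda>t. - act t c)"

definition zbrace :: "'a \<times> ('a \<Rightarrow> 'b) \<Rightarrow> 'a \<times> ('a \<Rightarrow> 'b) \<Rightarrow> 'b" where
  "zbrace u v = snd u (fst v)"

definition braided_crossed_module ::
  "('k::field \<Rightarrow> 'a::ab_group_add \<Rightarrow> 'a) \<Rightarrow> 'a set \<Rightarrow> ('a \<Rightarrow> 'a \<Rightarrow> 'a) \<Rightarrow>
   ('k \<Rightarrow> 'b::ab_group_add \<Rightarrow> 'b) \<Rightarrow> 'b set \<Rightarrow> ('b \<Rightarrow> 'b \<Rightarrow> 'b) \<Rightarrow>
   ('b \<Rightarrow> 'a) \<Rightarrow> ('a \<Rightarrow> 'a \<Rightarrow> 'b) \<Rightarrow> bool" where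
  "braided_crossed_module s0 M0 br0 s1 M1 br1 d brace \<longleftrightarrow>
     lie_algebra_on s0 M0 br0 \<and> lie_algebra_on s1 M1 br1 \<and>
     lie_hom_on s1 M1 br1 s0 M0 br0 d \<and>
     (\<forall>x\<in>M0. \<forall>y\<in>M0. brace x y \<in> M1) \<and>
     (\<forall>x\<in>M0. lin_on s0 s1 M0 (brace x)) \<and> (\<forall>y\<in>M0. lin_on s0 s1 M0 (\<lambda>x. brace x y)) \<and>
     (\<forall>x\<in>M0. \<forall>y\<in>M0. d (brace x y) = br0 x y) \<and>
     (\<forall>a\<in>M1. \<forall>b\<in>M1. brace (d a) (d b) = br1 a b) \<and>
     (\<forall>a\<in>M1. \<forall>x\<in>M0. brace (d a) x + brace x (d a) = 0) \<and>
     (\<forall>x\<in>M0. \<forall>y\<in>M0. \<forall>z\<in>M0. brace x (br0 y z) + brace z (br0 x y) + brace y (br0 z x) = 0)"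

end

theory Submission imports Defs begin

text \<open>The only non-obvious point is
  \<open>\<delta>{u,u} = 0\<close> for \<open>u = (x,\<xi>)\<close>: the two conditions \<open>\<partial>\<xi>(t) = [x,t]\<close> and \<open>\<xi>(\<partial>a) = x\<cdot>a\<close> give
  \<open>\<xi>[x,t] = x\<cdot>\<xi>(t)\<close>, which compared with the derivation rule for \<open>\<xi>[x,t]\<close> shows that \<open>\<xi>(x)\<close>
  is annihilated by the whole action, while \<open>\<partial>\<xi>(x) = [x,x] = 0\<close>. The Jacobi-type identity
  follows by rewriting \<open>\<xi>[y,z]\<close> with the derivation rule and \<open>\<eta>(\<partial>-)\<close>, \<open>\<zeta>(\<partial>-)\<close> with the
  action.\<close>

lemma
  assumes "lin_on sa sb UNIV f"
  shows lin_on_add: "f (x + y) = f x + f y"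
    and lin_on_scale: "f (sa c x) = sb c (f x)"
    and lin_on_zero: "f 0 = 0"
    and lin_on_minus: "f (- x) = - f x"
    and lin_on_diff: "f (x - y) = f x - f y"
proof -
  have add: "\<And>x y. f (x + y) = f x + f y" using assms by (simp add: lin_on_def)
  then show "f (x + y) = f x + f y" .
  show "f (sa c x) = sb c (f x)" using assms by (simp add: lin_on_def)
  show zero: "f 0 = 0" using add[of 0 0] by simp
  have minus: "\<And>x. f (- x) = - f x"
    using add zero by (metis add.right_inverse add_eq_0_iff)
  then show "f (- x) = - f x" .
  show "f (x - y) = f x - f y" using add[of x "- y"] minus[of y] by simp
qed

lemma lin_on_comp:
  "lin_on sa sb S f \<Longrightarrow> lin_on sb sc UNIV g \<Longrightarrow> lin_on sa sc S (\<lambda>x. g (f x))"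
  by (simp add: lin_on_def)

lemma lie_algebra_on_antisym:
  assumes "lie_algebra_on sa S br" "x \<in> S" "y \<in> S"
  shows "br y x = - br x y"
proof -
  have "x + y \<in> S" using assms by (simp add: lie_algebra_on_def subspace_on_def)
  then have "0 = br (x + y) (x + y)" using assms(1) by (simp add: lie_algebra_on_def)
  also have "\<dots> = br x x + br y x + (br x y + br y y)"
  proof -
    have "\<forall>z\<in>S. lin_on sa sa S (br z)" "\<forall>z\<in>S. lin_on sa sa S (\<lambda>w. br w z)"
      using assms(1) by (simp_all add: lie_algebra_on_def)
    with assms(2,3) \<open>x + y \<in> S\<close> show ?thesis by (simp add: lin_on_def)
  qed
  also have "\<dots> = br y x + br x y" using assms by (simp add: lie_algebra_on_def)
  finally show ?thesis by (simp add: eq_neg_iff_add_eq_0)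
qed

lemma vector_space_zscale:
  "vector_space s0 \<Longrightarrow> vector_space s1 \<Longrightarrow> vector_space (zscale s0 s1)"
  unfolding vector_space_def zscale_def
  by (auto simp: fun_eq_iff)

lemma zbrace_lin_left: "lin_on (zscale s0 s1) s1 S (\<lambda>u. zbrace u v)"
  by (simp add: lin_on_def zbrace_def zscale_def)

lemma zbrace_lin_right:
  assumes "lin_on s0 s1 UNIV (snd u)"
  shows "lin_on (zscale s0 s1) s1 S (zbrace u)"
  using assms by (simp add: lin_on_def zbrace_def zscale_def)

locale lie_crossed_module =
  fixes s0 :: "'k::field \<Rightarrow> 'a::ab_group_add \<Rightarrow> 'a" and br0 :: "'a \<Rightarrow> 'a \<Rightarrow> 'a"
    and s1 :: "'k \<Rightarrow> 'b::ab_group_add \<Rightarrow> 'b" and br1 :: "'b \<Rightarrow> 'b \<Rightarrow> 'b"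
    and d :: "'b \<Rightarrow> 'a" and act :: "'a \<Rightarrow> 'b \<Rightarrow> 'b"
  assumes crossed_module: "crossed_module s0 br0 s1 br1 d act"
begin

lemma lie_algebra0: "lie_algebra_on s0 UNIV br0"
  and lie_algebra1: "lie_algebra_on s1 UNIV br1"
  using crossed_module by (auto simp: crossed_module_def)

sublocale L0: vector_space s0 using lie_algebra0 by (simp add: lie_algebra_on_def)
sublocale L1: vector_space s1 using lie_algebra1 by (simp add: lie_algebra_on_def)

lemma lin_br0_left: "lin_on s0 s0 UNIV (\<lambda>x. br0 x y)"
  and br0_self: "br0 x x = 0"
  using lie_algebra0 by (auto simp: lie_algebra_on_def)

lemma br0_swap: "br0 y x = - br0 x y"
  and br1_swap: "br1 b a = - br1 a b"
  by (rule lie_algebra_on_antisym[OF lie_algebra0] lie_algebra_on_antisym[OF lie_algebra1]; simp)+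

lemma lin_d: "lin_on s1 s0 UNIV d"
  using crossed_module by (auto simp: crossed_module_def lie_hom_on_def)

lemma lin_act_right: "lin_on s1 s1 UNIV (act x)"
  and lin_act_left: "lin_on s0 s1 UNIV (\<lambda>x. act x a)"
  and act_br0: "act (br0 x y) a = act x (act y a) - act y (act x a)"
  and d_act: "d (act x a) = br0 x (d a)"
  and act_d: "act (d a) b = br1 a b"
  using crossed_module by (auto simp: crossed_module_def)

abbreviation Z where "Z \<equiv> Z0 s0 br0 s1 d act"
abbreviation \<delta> where "\<delta> \<equiv> zdelta d act"

lemma mem_Z0_iff:
  "(x, \<xi>) \<in> Z \<longleftrightarrow> lin_on s0 s1 UNIV \<xi> \<and> (\<forall>t. d (\<xi> t) = br0 x t) \<and>
     (\<forall>a. \<xi> (d a) = act x a) \<and> (\<forall>s t. \<xi> (br0 s t) = act s (\<xi> t) - act t (\<xi> s))"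
  by (simp add: Z0_def)

lemma
  assumes "(x, \<xi>) \<in> Z"
  shows Z0_lin: "lin_on s0 s1 UNIV \<xi>"
    and Z0_d: "d (\<xi> t) = br0 x t"
    and Z0_d_arg: "\<xi> (d a) = act x a"
    and Z0_br0: "\<xi> (br0 s t) = act s (\<xi> t) - act t (\<xi> s)"
  using assms by (auto simp: mem_Z0_iff)

lemma Z0_br0_left:
  assumes "(x, \<xi>) \<in> Z"
  shows "\<xi> (br0 x t) = act x (\<xi> t)"
  using Z0_d_arg[OF assms, of "\<xi> t"] by (simp add: Z0_d[OF assms])

lemma derivation_mem_Z0: "(d c, \<lambda>t. - act t c) \<in> Z"
  unfolding mem_Z0_iff
  by (simp add: lin_on_def lin_on_add[OF lin_act_left] lin_on_scale[OF lin_act_left]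
      lin_on_minus[OF lin_d] lin_on_minus[OF lin_act_right] lin_on_diff[OF lin_act_right]
      d_act act_d act_br0 br0_swap[of _ "d c"] br1_swap[of c])

lemma zdelta_mem_Z0: "\<delta> c \<in> Z"
  by (simp add: zdelta_def derivation_mem_Z0)

lemma zero_mem_Z0: "0 \<in> Z"
proof -
  have "(0, \<lambda>t. 0) \<in> Z"
    by (simp add: mem_Z0_iff lin_on_def lin_on_zero[OF lin_d] lin_on_zero[OF lin_act_left]
        lin_on_zero[OF lin_act_right] lin_on_zero[OF lin_br0_left])
  then show ?thesis by (simp add: zero_prod_def zero_fun_def)
qed

lemma add_mem_Z0:
  assumes "u \<in> Z" "v \<in> Z"
  shows "u + v \<in> Z"
proof -
  obtain x \<xi> y \<eta> where uv: "u = (x, \<xi>)" "v = (y, \<eta>)" by (cases u, cases v)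
  note u = assms(1)[unfolded uv] and v = assms(2)[unfolded uv]
  have "(x + y, \<lambda>t. \<xi> t + \<eta> t) \<in> Z"
    unfolding mem_Z0_iff
    by (simp add: lin_on_def lin_on_add[OF Z0_lin[OF u]] lin_on_add[OF Z0_lin[OF v]]
        lin_on_scale[OF Z0_lin[OF u]] lin_on_scale[OF Z0_lin[OF v]] L1.scale_right_distrib
        lin_on_add[OF lin_d] lin_on_add[OF lin_br0_left] lin_on_add[OF lin_act_left]
        lin_on_add[OF lin_act_right] Z0_d[OF u] Z0_d[OF v] Z0_d_arg[OF u] Z0_d_arg[OF v]
        Z0_br0[OF u] Z0_br0[OF v] algebra_simps)
  then show ?thesis by (simp add: uv plus_fun_def)
qed

lemma zscale_mem_Z0:
  assumes "u \<in> Z"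
  shows "zscale s0 s1 c u \<in> Z"
proof -
  obtain x \<xi> where u_eq: "u = (x, \<xi>)" by (cases u)
  note u = assms[unfolded u_eq]
  have "(s0 c x, \<lambda>t. s1 c (\<xi> t)) \<in> Z"
    unfolding mem_Z0_iff
    by (simp add: lin_on_def lin_on_add[OF Z0_lin[OF u]] lin_on_scale[OF Z0_lin[OF u]]
        L1.scale_right_distrib mult.commute lin_on_scale[OF lin_d] lin_on_scale[OF lin_br0_left]
        lin_on_scale[OF lin_act_left] lin_on_scale[OF lin_act_right]
        L1.scale_right_diff_distrib Z0_d[OF u] Z0_d_arg[OF u] Z0_br0[OF u])
  then show ?thesis by (simp add: u_eq zscale_def)
qed

lemma zdelta_lin: "lin_on s1 (zscale s0 s1) UNIV \<delta>"
  by (simp add: lin_on_def zdelta_def zscale_def fun_eq_iff lin_on_add[OF lin_d]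
      lin_on_scale[OF lin_d] lin_on_add[OF lin_act_right] lin_on_scale[OF lin_act_right])

lemma zbrace_lin_right_Z0: "u \<in> Z \<Longrightarrow> lin_on (zscale s0 s1) s1 Z (zbrace u)"
  by (cases u) (simp add: zbrace_lin_right mem_Z0_iff)

lemma zbrace_zdelta_skew:
  assumes "u \<in> Z"
  shows "zbrace (\<delta> a) u + zbrace u (\<delta> a) = 0"
  using assms by (cases u) (simp add: zbrace_def zdelta_def Z0_d_arg)

lemma zdelta_zbrace_self:
  assumes "u \<in> Z"
  shows "\<delta> (zbrace u u) = 0"
proof -
  obtain x \<xi> where u_eq: "u = (x, \<xi>)" by (cases u)
  note u = assms[unfolded u_eq]
  have "act t (\<xi> x) = 0" for t
    using Z0_br0[OF u, of x t] Z0_br0_left[OF u, of t] by simp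
  then show ?thesis
    by (simp add: u_eq zbrace_def zdelta_def Z0_d[OF u] br0_self zero_prod_def zero_fun_def)
qed

lemma zbrace_zdelta_jacobi:
  assumes "u \<in> Z" "v \<in> Z" "w \<in> Z"
  shows "zbrace u (\<delta> (zbrace v w)) + zbrace w (\<delta> (zbrace u v)) + zbrace v (\<delta> (zbrace w u)) = 0"
proof -
  obtain x \<xi> y \<eta> z \<zeta> where uvw: "u = (x, \<xi>)" "v = (y, \<eta>)" "w = (z, \<zeta>)"
    by (cases u, cases v, cases w)
  note u = assms(1)[unfolded uvw] and v = assms(2)[unfolded uvw] and w = assms(3)[unfolded uvw]
  have "zbrace u (\<delta> (zbrace v w)) = \<xi> (br0 y z)"
    by (simp add: zbrace_def zdelta_def uvw Z0_d[OF v])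
  also have "\<dots> = act y (\<xi> z) - act z (\<xi> y)" by (rule Z0_br0[OF u])
  also have "act y (\<xi> z) = \<eta> (br0 x z)" by (simp add: Z0_d_arg[OF v, symmetric] Z0_d[OF u])
  also have "act z (\<xi> y) = \<zeta> (br0 x y)" by (simp add: Z0_d_arg[OF w, symmetric] Z0_d[OF u])
  finally have "zbrace u (\<delta> (zbrace v w)) = \<eta> (br0 x z) - \<zeta> (br0 x y)" .
  moreover have "zbrace w (\<delta> (zbrace u v)) = \<zeta> (br0 x y)"
    by (simp add: zbrace_def zdelta_def uvw Z0_d[OF u])
  moreover have "zbrace v (\<delta> (zbrace w u)) = - \<eta> (br0 x z)"
    by (simp add: zbrace_def zdelta_def uvw Z0_d[OF w] br0_swap[of z x] lin_on_minus[OF Z0_lin[OF v]])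
  ultimately show ?thesis by simp
qed

lemma zbrace_zdelta_zdelta: "zbrace (\<delta> a) (\<delta> b) = br1 a b"
  by (simp add: zbrace_def zdelta_def act_d br1_swap[of b a])

lemma lie_algebra_Z0: "lie_algebra_on (zscale s0 s1) Z (\<lambda>u v. \<delta> (zbrace u v))"
  unfolding lie_algebra_on_def subspace_on_def
proof (intro conjI ballI allI)
  fix u v w assume u: "u \<in> Z" and v: "v \<in> Z" and w: "w \<in> Z"
  have "\<delta> (zbrace u (\<delta> (zbrace v w)) + zbrace w (\<delta> (zbrace u v)) + zbrace v (\<delta> (zbrace w u))) = 0"
    by (simp add: zbrace_zdelta_jacobi[OF u v w] lin_on_zero[OF zdelta_lin])
  then show "\<delta> (zbrace u (\<delta> (zbrace v w))) + \<delta> (zbrace v (\<delta> (zbrace w u)))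
      + \<delta> (zbrace w (\<delta> (zbrace u v))) = 0"
    by (simp add: lin_on_add[OF zdelta_lin] add_ac)
qed (auto simp: vector_space_zscale L0.vector_space_axioms L1.vector_space_axioms zero_mem_Z0
    add_mem_Z0 zscale_mem_Z0 zdelta_mem_Z0 zdelta_zbrace_self zdelta_lin
    lin_on_comp[OF zbrace_lin_right_Z0] lin_on_comp[OF zbrace_lin_left])

lemma braided_crossed_module_centre:
  "braided_crossed_module (zscale s0 s1) Z (\<lambda>u v. \<delta> (zbrace u v))
     s1 UNIV (\<lambda>a b. zbrace (\<delta> a) (\<delta> b)) \<delta> zbrace"
  unfolding braided_crossed_module_def zbrace_zdelta_zdelta
  by (auto simp: lie_algebra_Z0 lie_algebra1 lie_hom_on_def zdelta_mem_Z0 zdelta_lin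
      zbrace_zdelta_zdelta zbrace_lin_right_Z0 zbrace_lin_left zbrace_zdelta_skew
      zbrace_zdelta_jacobi)

end

theorem theorem4p3:
  fixes s0 :: "'k::field \<Rightarrow> 'a::ab_group_add \<Rightarrow> 'a" and br0 :: "'a \<Rightarrow> 'a \<Rightarrow> 'a"
    and s1 :: "'k \<Rightarrow> 'b::ab_group_add \<Rightarrow> 'b" and br1 :: "'b \<Rightarrow> 'b \<Rightarrow> 'b"
    and d :: "'b \<Rightarrow> 'a" and act :: "'a \<Rightarrow> 'b \<Rightarrow> 'b"
  assumes char: "(2::'k) \<noteq> 0"
    and cm: "crossed_module s0 br0 s1 br1 d act"
  defines "Z \<equiv> Z0 s0 br0 s1 d act"
    and "\<delta> \<equiv> zdelta d act"
  shows "(\<forall>c. (d c, (\<lambda>t. - act t c)) \<in> Z)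
    \<and> (\<forall>c. \<delta> c \<in> Z) \<and> lin_on s1 (zscale s0 s1) UNIV \<delta>
    \<and> (\<forall>u\<in>Z. lin_on (zscale s0 s1) s1 Z (zbrace u)) \<and> (\<forall>v\<in>Z. lin_on (zscale s0 s1) s1 Z (\<lambda>u. zbrace u v))
    \<and> (\<forall>a. \<forall>u\<in>Z. zbrace (\<delta> a) u + zbrace u (\<delta> a) = 0)
    \<and> (\<forall>u\<in>Z. \<delta> (zbrace u u) = 0)
    \<and> (\<forall>u\<in>Z. \<forall>v\<in>Z. \<forall>w\<in>Z.
         zbrace u (\<delta> (zbrace v w)) + zbrace w (\<delta> (zbrace u v)) + zbrace v (\<delta> (zbrace w u)) = 0)
    \<and> braided_crossed_module (zscale s0 s1) Z (\<lambda>u v. \<delta> (zbrace u v))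
        s1 UNIV (\<lambda>a b. zbrace (\<delta> a) (\<delta> b)) \<delta> zbrace"
proof -
  interpret lie_crossed_module s0 br0 s1 br1 d act by (rule lie_crossed_module.intro[OF cm])
  show ?thesis
    unfolding Z_def \<delta>_def
    using derivation_mem_Z0 zdelta_mem_Z0 zdelta_lin zbrace_lin_right_Z0 zbrace_lin_left
      zbrace_zdelta_skew zdelta_zbrace_self zbrace_zdelta_jacobi braided_crossed_module_centre
    by blast
qed

end
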